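(* Let $M\in\mathrm{Mat}(2,\mathbb{Z})$ with $\mathrm{mgcd}(M)=\mu\neq0$, and let $C=\begin{pmatrix}0&-D\\1&T\end{pmatrix}$ with $D=\det(M)$, $T=\mathrm{trace}(M)$ be its companion matrix. Then for all integers $n\ge2$ with $\gcd(n,\mu)=1$, the reductions of $M$ and $C$ mod $n$ are $\mathrm{Mat}(2,\mathbb{Z}_n)^\times$-conjugate. In this case, $M$ and $C$ share the same local statistics on $L_n$.
   Context: For $M=\begin{pmatrix}a&b\\c&d\end{pmatrix}\in\mathrm{Mat}(2,\mathbb{Z})$, $\mathrm{mgcd}(M)=\gcd(b,c,d-a)\ge0$ (equal to $0$ iff $b=c=d-a=0$). $\mathbb{Z}_n=\mathbb{Z}/n\mathbb{Z}$ and $\mathrm{Mat}(2,\mathbb{Z}_n)^\times$ is the group of invertible $2\times2$ matrices over $\mathbb{Z}_n$. $L_n=\{(\frac{k}{n},\frac{\ell}{n}):0\le k,\ell<n\}\subset\mathbb{T}^2=\mathbb{R}^2/\mathbb{Z}^2$, on which an integer matrix acts by multiplication mod $1$. Two integer matrices have the same local statistics on $L_n$ if the directed pseudo-graphs on $L_n$ they induce (vertices the points of $L_n$, a directed edge from $x$ to $Mx$) are isomorphic as graphs. *)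

theory Defs
  imports "HOL-Analysis.Analysis" "HOL-Number_Theory.Cong"
begin

type_synonym imat2 = "int ^ 2 ^ 2"

definition mgcd :: "imat2 \<Rightarrow> int" where
  "mgcd M = gcd (M $ 1 $ 2) (gcd (M $ 2 $ 1) (M $ 2 $ 2 - M $ 1 $ 1))"

definition companion :: "imat2 \<Rightarrow> imat2" where
  "companion M = (\<chi> i j. if i = 1 then (if j = 1 then 0 else - det M)
                                     else (if j = 1 then 1 else trace M))"

definition mat_cong :: "int \<Rightarrow> imat2 \<Rightarrow> imat2 \<Rightarrow> bool" where
  "mat_cong n A B \<longleftrightarrow> (\<forall>i j. [A $ i $ j = B $ i $ j] (mod n))"

text \<open>Reductions mod n are conjugate by an element of Mat(2,Z_n)^x
  (P, Q integer representatives of an invertible matrix and its inverse).\<close>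
definition conj_mod :: "int \<Rightarrow> imat2 \<Rightarrow> imat2 \<Rightarrow> bool" where
  "conj_mod n A B \<longleftrightarrow> (\<exists>P Q :: imat2.
      mat_cong n (P ** Q) (mat 1) \<and> mat_cong n (Q ** P) (mat 1) \<and>
      mat_cong n (P ** A ** Q) B)"

text \<open>The lattice L_n, the point (k/n, l/n) of the torus identified with (k,l), 0 \<le> k,l < n.\<close>
definition Ln :: "int \<Rightarrow> (int \<times> int) set" where
  "Ln n = {0..<n} \<times> {0..<n}"

text \<open>Action of an integer matrix on L_n: multiplication mod 1 of (k/n, l/n)
  corresponds to multiplication mod n of (k,l).\<close>
definition act :: "int \<Rightarrow> imat2 \<Rightarrow> int \<times> int \<Rightarrow> int \<times> int" where
  "act n M x = ((M $ 1 $ 1 * fst x + M $ 1 $ 2 * snd x) mod n,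
                (M $ 2 $ 1 * fst x + M $ 2 $ 2 * snd x) mod n)"

definition edges :: "int \<Rightarrow> imat2 \<Rightarrow> ((int \<times> int) \<times> (int \<times> int)) set" where
  "edges n M = {(x, act n M x) | x. x \<in> Ln n}"

definition same_local_stats :: "int \<Rightarrow> imat2 \<Rightarrow> imat2 \<Rightarrow> bool" where
  "same_local_stats n A B \<longleftrightarrow> (\<exists>f. bij_betw f (Ln n) (Ln n) \<and>
      (\<forall>x\<in>Ln n. \<forall>y\<in>Ln n. (x, y) \<in> edges n A \<longleftrightarrow> (f x, f y) \<in> edges n B))"

end

theory Submission
  imports Defs
begin

text \<open>With \<open>v \<in> \<int>\<^sup>2\<close> and \<open>S = (v | Mv)\<close>, Cayley--Hamilton gives \<open>M S = S C\<close> for the companion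
  matrix \<open>C\<close>, so \<open>M\<close> and \<open>C\<close> are conjugate modulo \<open>n\<close> as soon as \<open>det S\<close> is a unit modulo \<open>n\<close>.
  Now \<open>det S = c x\<^sup>2 + (d - a) x y - b y\<^sup>2\<close> is a binary quadratic form whose coefficients have gcd
  \<open>\<mu>\<close>; coprimality of \<open>n\<close> and \<open>\<mu>\<close> makes the form nonzero modulo every prime \<open>p\<close> dividing \<open>n\<close>,
  and the Chinese remainder theorem glues these local witnesses to one \<open>v\<close> with \<open>det S\<close> coprime
  to \<open>n\<close>. Finally, conjugation by \<open>P\<close> modulo \<open>n\<close> makes \<open>x \<mapsto> P x\<close> an isomorphism of the
  induced graphs on \<open>L\<^sub>n\<close>.\<close>

lemma mat_cong_refl: "mat_cong n A A"
  by (simp add: mat_cong_def)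

lemma mat_cong_trans: "mat_cong n A B \<Longrightarrow> mat_cong n B C \<Longrightarrow> mat_cong n A C"
  unfolding mat_cong_def by (blast intro: cong_trans)

lemma mat_cong_mult:
  "mat_cong n A A' \<Longrightarrow> mat_cong n B B' \<Longrightarrow> mat_cong n (A ** B) (A' ** B')"
  unfolding mat_cong_def matrix_matrix_mult_def
  by (simp add: sum_2 cong_add cong_mult)

lemma mat_cong_mat_1: "[k = 1] (mod n) \<Longrightarrow> mat_cong n (mat k) (mat 1)"
  by (simp add: mat_cong_def mat_def)

lemma mat_mult_mat: "mat k ** mat l = (mat (k * l) :: imat2)"
  by (simp add: vec_eq_iff forall_2 mat_def matrix_matrix_mult_def sum_2)

lemma mat_mult_commute: "mat k ** A = A ** (mat k :: imat2)"
  unfolding mat_def matrix_matrix_mult_def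
  by (simp add: vec_eq_iff if_distrib if_distribR mult.commute cong: if_cong)

definition adj2 :: "imat2 \<Rightarrow> imat2" where
  "adj2 A = (\<chi> i j. if i = 1 then (if j = 1 then A $ 2 $ 2 else - A $ 1 $ 2)
                            else (if j = 1 then - A $ 2 $ 1 else A $ 1 $ 1))"

lemma adj2_mult: "adj2 A ** A = mat (det A)"
  by (simp add: vec_eq_iff forall_2 adj2_def mat_def matrix_matrix_mult_def sum_2 det_2
      algebra_simps)

lemma mult_adj2: "A ** adj2 A = mat (det A)"
  by (simp add: vec_eq_iff forall_2 adj2_def mat_def matrix_matrix_mult_def sum_2 det_2
      algebra_simps)

lemma invertible_mod_if_coprime_det:
  assumes "coprime (det S) n"
  obtains P where "mat_cong n (P ** S) (mat 1)" "mat_cong n (S ** P) (mat 1)"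
proof -
  obtain u where u: "[u * det S = 1] (mod n)"
    using assms cong_solve_coprime_int by (metis mult.commute)
  have "mat u ** adj2 S ** S = mat (u * det S)"
    by (simp add: adj2_mult mat_mult_mat flip: matrix_mul_assoc)
  moreover have "S ** (mat u ** adj2 S) = mat u ** (S ** adj2 S)"
    by (metis matrix_mul_assoc mat_mult_commute)
  then have "S ** (mat u ** adj2 S) = mat (u * det S)"
    by (simp add: mult_adj2 mat_mult_mat)
  ultimately show ?thesis
    using that[of "mat u ** adj2 S"] mat_cong_mat_1[OF u] by simp
qed

lemma conj_mod_if_intertwined:
  assumes "coprime (det S) n" and "A ** S = S ** B"
  shows "conj_mod n A B"
proof -
  obtain P where PS: "mat_cong n (P ** S) (mat 1)" and SP: "mat_cong n (S ** P) (mat 1)"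
    using invertible_mod_if_coprime_det[OF assms(1)] .
  have "P ** A ** S = (P ** S) ** B"
    by (metis assms(2) matrix_mul_assoc)
  then have "mat_cong n (P ** A ** S) B"
    using mat_cong_mult[OF PS mat_cong_refl, of B] by simp
  with PS SP show ?thesis
    unfolding conj_mod_def by blast
qed

definition cyclic_mat :: "imat2 \<Rightarrow> int ^ 2 \<Rightarrow> imat2" where
  "cyclic_mat M v = (\<chi> i j. if j = 1 then v $ i else (M *v v) $ i)"

lemma cyclic_mat_intertwines: "M ** cyclic_mat M v = cyclic_mat M v ** companion M"
  by (simp add: vec_eq_iff forall_2 cyclic_mat_def companion_def matrix_matrix_mult_def
      matrix_vector_mult_def sum_2 det_2 trace_def algebra_simps)

lemma det_cyclic_mat:
  "det (cyclic_mat M v) =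
     M $ 2 $ 1 * (v $ 1)\<^sup>2 + (M $ 2 $ 2 - M $ 1 $ 1) * v $ 1 * v $ 2 - M $ 1 $ 2 * (v $ 2)\<^sup>2"
  by (simp add: det_2 cyclic_mat_def matrix_vector_mult_def sum_2 algebra_simps power2_eq_square)

lemma binary_quadratic_not_dvd:
  fixes b c e p :: int
  assumes "\<not> (p dvd b \<and> p dvd c \<and> p dvd e)"
  shows "\<exists>x y. \<not> p dvd c * x\<^sup>2 + e * x * y - b * y\<^sup>2"
proof (cases "p dvd c \<and> p dvd b")
  case True
  have "\<not> p dvd c + e - b"
  proof
    assume "p dvd c + e - b"
    then have "p dvd (c + e - b) - c + b"
      using True dvd_add dvd_diff by meson
    with True assms show False
      by simp
  qed
  then have "\<not> p dvd c * 1\<^sup>2 + e * 1 * 1 - b * 1\<^sup>2"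
    by simp
  then show ?thesis by blast
next
  case False
  then have "\<not> p dvd c * 1\<^sup>2 + e * 1 * 0 - b * 0\<^sup>2 \<or> \<not> p dvd c * 0\<^sup>2 + e * 0 * 1 - b * 1\<^sup>2"
    by simp
  then show ?thesis by blast
qed

lemma coprime_value_exists:
  fixes f :: "int \<Rightarrow> int \<Rightarrow> int" and n :: int
  assumes f_cong: "\<And>m x x' y y'. [x = x'] (mod m) \<Longrightarrow> [y = y'] (mod m) \<Longrightarrow>
                     [f x y = f x' y'] (mod m)"
    and "\<And>p. prime p \<Longrightarrow> p dvd n \<Longrightarrow> \<exists>x y. \<not> p dvd f x y"
    and "n > 0"
  shows "\<exists>x y. coprime (f x y) n"
  using assms(2,3)
proof (induction "nat n" arbitrary: n rule: less_induct)
  case less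
  show ?case
  proof (cases "n = 1")
    case True
    then show ?thesis by simp
  next
    case False
    with less.prems obtain p where p: "prime p" "p dvd n"
      using prime_divisor_exists[of n] by auto
    then obtain m where n: "n = p * m" by (auto elim: dvdE)
    have "p > 1" using p(1) prime_gt_1_int by blast
    then have "m > 0" "nat m < nat n"
      using less.prems(2) n by (auto simp: zero_less_mult_iff)
    moreover have "\<exists>x y. \<not> q dvd f x y" if "prime q" "q dvd m" for q
      using less.prems(1) that n by simp
    ultimately obtain x0 y0 where coprime_m: "coprime (f x0 y0) m"
      using less.hyps by blast
    show ?thesis
    proof (cases "p dvd m")
      case True
      have "coprime (f x0 y0) p"
        using coprime_divisors[OF dvd_refl True coprime_m] .
      with coprime_m have "coprime (f x0 y0) n"
        using n by simp
      then show ?thesis by blast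
    next
      case False
      obtain x1 y1 where not_dvd: "\<not> p dvd f x1 y1"
        using less.prems(1) p by blast
      have "coprime m p"
        using False p(1) prime_imp_coprime coprime_commute by blast
      then obtain x y where x: "[x = x0] (mod m)" "[x = x1] (mod p)"
        and y: "[y = y0] (mod m)" "[y = y1] (mod p)"
        using binary_chinese_remainder_int by metis
      have "coprime (f x y) m"
        using coprime_m f_cong[OF x(1) y(1)] cong_imp_coprime cong_sym by blast
      moreover have "\<not> p dvd f x y"
        using not_dvd f_cong[OF x(2) y(2)] cong_dvd_iff by blast
      then have "coprime (f x y) p"
        using p(1) prime_imp_coprime coprime_commute by blast
      ultimately show ?thesis
        using n by auto
    qed
  qed
qed

lemma exists_coprime_det_cyclic_mat:
  fixes n :: int
  assumes "n > 0" and "coprime n (mgcd M)"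
  shows "\<exists>v. coprime (det (cyclic_mat M v)) n"
proof -
  define f where "f x y = M $ 2 $ 1 * x\<^sup>2 + (M $ 2 $ 2 - M $ 1 $ 1) * x * y - M $ 1 $ 2 * y\<^sup>2"
    for x y
  have "[f x y = f x' y'] (mod m)" if "[x = x'] (mod m)" "[y = y'] (mod m)" for m x x' y y'
    unfolding f_def using that by (intro cong_add cong_diff cong_mult cong_pow cong_refl)
  moreover have "\<exists>x y. \<not> p dvd f x y" if "prime p" "p dvd n" for p
  proof -
    have "\<not> p dvd mgcd M"
      using assms(2) that by (metis coprime_common_divisor not_prime_unit)
    then show ?thesis
      unfolding f_def mgcd_def by (intro binary_quadratic_not_dvd) simp
  qed
  ultimately obtain x y where "coprime (f x y) n"
    using coprime_value_exists assms(1) by blast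
  then have "coprime (det (cyclic_mat M (vector [x, y]))) n"
    by (simp add: det_cyclic_mat f_def)
  then show ?thesis ..
qed

lemma conj_mod_companion:
  fixes n :: int
  assumes "n > 0" and "coprime n (mgcd M)"
  shows "conj_mod n M (companion M)"
proof -
  obtain v where "coprime (det (cyclic_mat M v)) n"
    using exists_coprime_det_cyclic_mat[OF assms] by blast
  then show ?thesis
    using conj_mod_if_intertwined cyclic_mat_intertwines by blast
qed

lemma act_act: "act n A (act n B x) = act n (A ** B) x"
proof -
  have mod_inside: "(a * (u mod n) + b * (v mod n)) mod n = (a * u + b * v) mod n"
    for a b u v :: int
    by (metis mod_add_eq mod_mult_right_eq)
  show ?thesis
    unfolding act_def matrix_matrix_mult_def
    by (simp add: sum_2 mod_inside) (simp add: algebra_simps)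
qed

lemma act_mat_cong:
  assumes "mat_cong n A B"
  shows "act n A x = act n B x"
proof -
  have "[A $ i $ 1 * fst x + A $ i $ 2 * snd x = B $ i $ 1 * fst x + B $ i $ 2 * snd x] (mod n)"
    for i
    using assms by (simp add: mat_cong_def cong_add cong_mult)
  then show ?thesis
    by (simp add: act_def cong_def)
qed

lemma act_mat_1: "x \<in> Ln n \<Longrightarrow> act n (mat 1) x = x"
  by (auto simp: act_def mat_def Ln_def)

lemma act_in_Ln: "n > 0 \<Longrightarrow> act n A x \<in> Ln n"
  by (simp add: Ln_def act_def)

lemma mem_edges_iff: "(x, y) \<in> edges n A \<longleftrightarrow> x \<in> Ln n \<and> y = act n A x"
  unfolding edges_def by blast

lemma same_local_stats_if_conj_mod:
  fixes n :: int
  assumes "n > 0" and "conj_mod n A B"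
  shows "same_local_stats n A B"
proof -
  obtain P Q where PQ: "mat_cong n (P ** Q) (mat 1)" and QP: "mat_cong n (Q ** P) (mat 1)"
    and PAQ: "mat_cong n (P ** A ** Q) B"
    using assms(2) unfolding conj_mod_def by blast
  have bij: "bij_betw (act n P) (Ln n) (Ln n)"
    by (rule bij_betwI[where g = "act n Q"])
      (use assms(1) PQ QP in \<open>auto simp: act_in_Ln act_act act_mat_1 act_mat_cong[of n]\<close>)
  have "mat_cong n (B ** P) (P ** A ** Q ** P)"
    using mat_cong_mult[OF PAQ mat_cong_refl] unfolding mat_cong_def by (simp add: cong_sym)
  also have "P ** A ** Q ** P = P ** A ** (Q ** P)"
    by (simp add: matrix_mul_assoc)
  finally have "mat_cong n (B ** P) (P ** A)"
    using mat_cong_mult[OF mat_cong_refl QP, of "P ** A"] mat_cong_trans by auto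
  then have intertwine: "act n B (act n P x) = act n P (act n A x)" for x
    using act_mat_cong by (simp add: act_act)
  have "y = act n A x \<longleftrightarrow> act n P y = act n B (act n P x)" if "x \<in> Ln n" "y \<in> Ln n" for x y
    using inj_on_eq_iff[OF bij_betw_imp_inj_on[OF bij] that(2) act_in_Ln[OF assms(1)]] intertwine
    by simp
  then show ?thesis
    unfolding same_local_stats_def mem_edges_iff using bij bij_betwE by blast
qed

theorem proposition33:
  fixes M :: imat2 and n :: int
  assumes "mgcd M \<noteq> 0"
    and "n \<ge> 2"
    and "coprime n (mgcd M)"
  shows "conj_mod n M (companion M) \<and> same_local_stats n M (companion M)"
proof -
  have "n > 0" using assms(2) by simp
  then show ?thesis
    using conj_mod_companion same_local_stats_if_conj_mod assms(3) by blast
qed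

end
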